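(* Let $g=\theta\circ\lambda:\mathbf{S}^n\to[-\infty,\infty]$ be a spectral function with symmetric $\theta:\mathbb{R}^n\to[-\infty,\infty]$, and assume $\theta$ is locally Lipschitz continuous relative to its domain. Then for any $X\in\mathbf{S}^n$ with $g(X)$ finite and any $v\in\mathbb{R}^n$, $$\mathrm{d}\theta(\lambda(X))(v)=\mathrm{d}g\big(\mathrm{Diag}(\lambda(X))\big)(\mathrm{Diag}(v)).$$ In particular, if $C\subset\mathbf{S}^n$ is a spectral set with $C=\{X:\lambda(X)\in\Theta\}$ for a symmetric set $\Theta\subset\mathbb{R}^n$, then for every $X\in C$, $$T_\Theta(\lambda(X))=\{v\in\mathbb{R}^n:\ \mathrm{Diag}(v)\in T_C(\mathrm{Diag}(\lambda(X)))\}.$$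
   Context: $\mathbf{S}^n$: real symmetric $n\times n$ matrices with trace inner product and Frobenius norm. $\lambda(X)$: eigenvalues of $X$ in nonincreasing order; $\mathrm{Diag}(x)$: diagonal matrix with diagonal $x$. $\theta$ is symmetric if $\theta(Px)=\theta(x)$ for all permutation matrices $P$; a set $\Theta$ is symmetric if its indicator is symmetric; $g$ is spectral if $g(U^\top XU)=g(X)$ for all orthogonal $U$ (then $g=\theta\circ\lambda$ with $\theta(x)=g(\mathrm{Diag}(x))$); $C$ is a spectral set if its indicator is spectral. A function $f$ is locally Lipschitz continuous relative to a set $D\subset\mathrm{dom}\,f$ around $\bar x\in D$ ($f(\bar x)$ finite) if there exist $\ell\ge0$ and a neighborhood $V$ of $\bar x$ with $|f(x)-f(y)|\le\ell\|x-y\|$ for $x,y\in V\cap D$; it is locally Lipschitz continuous relative to its domain if this holds around every point of $\mathrm{dom}\,f$ with $D=\mathrm{dom}\,f$. Subderivative: $\mathrm{d}f(\bar x)(\bar w)=\liminf_{t\downarrow0,\,w\to\bar w}\frac{f(\bar x+tw)-f(\bar x)}{t}$. Tangent cone: $T_C(\bar x)=\{w:\exists t_k\downarrow0,\ w_k\to w,\ \bar x+t_kw_k\in C\}$. *)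

theory Defs
  imports "HOL-Analysis.Analysis" "HOL-Library.Extended_Real"
begin

text \<open>Ambient space: n x n real matrices, indexed by a finite linearly ordered type 'n
  (so n = CARD('n) and the order on 'n fixes the ordering 1..n of coordinates).
  The norm on real^'n^'n is the Frobenius norm.\<close>

definition symmats :: "(real^'n^'n) set" where
  "symmats = {X. transpose X = X}"

definition Diag :: "real^'n \<Rightarrow> real^'n^'n" where
  "Diag x = (\<chi> i j. if i = j then x $ i else 0)"

definition eigvals :: "real^('n::{finite,linorder})^('n::{finite,linorder}) \<Rightarrow> real^('n::{finite,linorder})" where
  "eigvals X = (THE x. (\<forall>i j. i \<le> j \<longrightarrow> x $ j \<le> x $ i) \<and>
                      (\<forall>t. det (mat t - X) = (\<Prod>i\<in>UNIV. t - x $ i)))"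

definition symmetric_fun :: "(real^'n \<Rightarrow> 'b) \<Rightarrow> bool" where
  "symmetric_fun f \<longleftrightarrow> (\<forall>p x. p permutes (UNIV::'n set) \<longrightarrow> f (\<chi> i. x $ p i) = f x)"

definition symmetric_set :: "(real^'n) set \<Rightarrow> bool" where
  "symmetric_set A \<longleftrightarrow> symmetric_fun (\<lambda>x. x \<in> A)"

definition edom :: "('a \<Rightarrow> ereal) \<Rightarrow> 'a set" where
  "edom f = {x. f x < \<infinity>}"

definition loc_lipschitz_rel :: "('a::real_normed_vector \<Rightarrow> ereal) \<Rightarrow> 'a set \<Rightarrow> 'a \<Rightarrow> bool" where
  "loc_lipschitz_rel f D xb \<longleftrightarrow> xb \<in> D \<and> D \<subseteq> edom f \<and> \<bar>f xb\<bar> \<noteq> \<infinity> \<and>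
     (\<exists>l V. l \<ge> 0 \<and> open V \<and> xb \<in> V \<and>
        (\<forall>x\<in>V \<inter> D. \<forall>y\<in>V \<inter> D. \<bar>f x - f y\<bar> \<le> ereal (l * norm (x - y))))"

definition loc_lipschitz_on_dom :: "('a::real_normed_vector \<Rightarrow> ereal) \<Rightarrow> bool" where
  "loc_lipschitz_on_dom f \<longleftrightarrow> (\<forall>x\<in>edom f. loc_lipschitz_rel f (edom f) x)"

definition subderiv_on :: "'a::real_normed_vector set \<Rightarrow> ('a \<Rightarrow> ereal) \<Rightarrow> 'a \<Rightarrow> 'a \<Rightarrow> ereal" where
  "subderiv_on E f xb wb =
     Liminf (at_right (0::real) \<times>\<^sub>F inf (nhds wb) (principal E))
       (\<lambda>(t, w). (f (xb + t *\<^sub>R w) - f xb) / ereal t)"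

abbreviation subderiv :: "('a::real_normed_vector \<Rightarrow> ereal) \<Rightarrow> 'a \<Rightarrow> 'a \<Rightarrow> ereal" where
  "subderiv f \<equiv> subderiv_on UNIV f"

definition tangent_cone :: "'a::real_normed_vector set \<Rightarrow> 'a \<Rightarrow> 'a set" where
  "tangent_cone C xb = {w. \<exists>t wk. (\<forall>k. t k > 0 \<and> xb + t k *\<^sub>R wk k \<in> C) \<and>
                              t \<longlonglongrightarrow> 0 \<and> wk \<longlonglongrightarrow> w}"

end

theory Submission
  imports Defs "HOL-Computational_Algebra.Polynomial"
begin

text \<open>By Weyl's inequality \<open>|\<lambda>\<^sub>k(A) - \<lambda>\<^sub>k(B)| \<le> \<parallel>A - B\<parallel>\<close>, for symmetric \<open>W\<close> near \<open>Diag v\<close>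
  and \<open>t > 0\<close> the spectrum of \<open>Diag x + t W\<close> is a rearrangement of \<open>x + t z\<close> for some \<open>z\<close> with
  \<open>\<parallel>z - v\<parallel> \<le> n \<parallel>W - Diag v\<parallel>\<close>, uniformly in \<open>t\<close>; diagonal directions \<open>W = Diag w\<close> give exactly
  \<open>x + t w\<close>. Since \<open>\<theta>\<close> is symmetric, every difference quotient of \<open>g\<close> at \<open>Diag x\<close> is thus one of
  \<open>\<theta>\<close> at \<open>x\<close> along a nearby direction and conversely, so the two lower limits agree. The claim
  on tangent cones is the case of the indicator functions of \<open>\<Theta>\<close> and \<open>C\<close>, whose subderivatives
  are \<open>0\<close> on the tangent cone and \<open>\<infinity>\<close> off it.\<close>

section \<open>Entries of a vector as a multiset\<close>

definition entries :: "real^'n \<Rightarrow> real multiset" where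
  "entries a = image_mset (($) a) (mset_set UNIV)"

definition sorted_desc :: "real^'n::{finite,linorder} \<Rightarrow> bool" where
  "sorted_desc a \<longleftrightarrow> (\<forall>i j. i \<le> j \<longrightarrow> a$j \<le> a$i)"

lemma card_entries: "card {i. P (a$i)} = size (filter_mset P (entries a))"
  unfolding entries_def filter_mset_image_mset by simp

lemma entries_eq_permutes:
  fixes a b :: "real^'n"
  assumes "entries a = entries b"
  obtains p where "p permutes UNIV" "\<And>i. a$i = b$(p i)"
proof -
  have "card {i. a$i = c} = card {i. b$i = c}" for c
    using card_entries[of "\<lambda>v. v = c"] assms by metis
  then have "\<exists>h. bij_betw h {i. a$i = c} {i. b$i = c}" for c
    by (intro finite_same_card_bij) auto
  then obtain h where h: "\<And>c. bij_betw (h c) {i. a$i = c} {i. b$i = c}" by metis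
  define p where "p i = h (a$i) i" for i
  have bp: "b$(p i) = a$i" for i
    using bij_betwE[OF h[of "a$i"]] unfolding p_def by auto
  have "inj p"
  proof (rule injI)
    fix i j assume "p i = p j"
    then have "a$i = a$j" using bp by metis
    with \<open>p i = p j\<close> show "i = j" using bij_betw_imp_inj_on[OF h[of "a$i"]]
      unfolding p_def by (auto simp: inj_on_def)
  qed
  then have "bij p"
    by (simp add: bij_def finite_UNIV_inj_surj)
  then have "p permutes UNIV"
    by (rule bij_imp_permutes) simp
  with bp show ?thesis using that by metis
qed

lemma entries_eq_if_char_poly_eq:
  fixes a b :: "real^'n"
  assumes "\<And>t. (\<Prod>i\<in>UNIV. t - a$i) = (\<Prod>i\<in>UNIV. t - b$i)"
  shows "entries a = entries b"
proof -
  have proots: "proots (\<Prod>i\<in>UNIV. [:- c$i, 1:]) = entries c" for c :: "real^'n"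
    by (subst proots_prod) (auto simp: entries_def sum_unfold_sum_mset[of "\<lambda>i. {#c$i#}"] sum_mset_sum_list)
  have "(\<Prod>i\<in>UNIV. [:- a$i, 1:]) = (\<Prod>i\<in>UNIV. [:- b$i, 1:])"
    using assms by (simp add: poly_eq_poly_eq_iff[symmetric] poly_prod fun_eq_iff)
  then show ?thesis by (metis proots)
qed

lemma sorted_desc_entries_eq:
  fixes a b :: "real^'n::{finite,linorder}"
  assumes "sorted_desc a" "sorted_desc b" "entries a = entries b"
  shows "a = b"
proof -
  have no_less: "\<not> x$k < y$k" if sx: "sorted_desc x" and sy: "sorted_desc y"
    and xy: "entries x = entries y" for x y :: "real^'n::{finite,linorder}" and k
  proof
    assume lt: "x$k < y$k"
    have "{i. y$k \<le> x$i} \<subseteq> {..<k}"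
    proof
      fix i assume "i \<in> {i. y$k \<le> x$i}"
      then have "\<not> x$i \<le> x$k" using lt by simp
      with sx show "i \<in> {..<k}"
        unfolding sorted_desc_def by (meson lessThan_iff linorder_not_le)
    qed
    then have "card {i. y$k \<le> x$i} \<le> card {..<k}"
      by (intro card_mono) auto
    also have "\<dots> < card {..k}"
      by (intro psubset_card_mono) auto
    also have "\<dots> \<le> card {i. y$k \<le> y$i}"
      using sy unfolding sorted_desc_def by (intro card_mono) auto
    also have "\<dots> = card {i. y$k \<le> x$i}"
      using card_entries[of "\<lambda>v. y$k \<le> v"] xy by metis
    finally show False by simp
  qed
  show ?thesis
    using no_less[OF assms] no_less[OF assms(2,1) assms(3)[symmetric]]
    by (simp add: vec_eq_iff order.antisym not_less)
qed

definition ord_index :: "'n::{finite,linorder} \<Rightarrow> nat" where "ord_index i = card {j. j < i}"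

lemma strict_mono_ord_index: "strict_mono ord_index"
  unfolding strict_mono_def ord_index_def by (auto intro: psubset_card_mono)

lemma ord_index_image: "ord_index ` (UNIV::'n::{finite,linorder} set) = {..<CARD('n)}"
proof -
  have "ord_index ` (UNIV::'n set) \<subseteq> {..<CARD('n)}"
    unfolding ord_index_def by (auto intro: psubset_card_mono)
  moreover have "card (ord_index ` (UNIV::'n set)) = CARD('n)"
    using card_image[OF strict_mono_imp_inj_on[OF strict_mono_ord_index]] by simp
  ultimately show ?thesis by (intro card_subset_eq) auto
qed

lemma sorted_desc_rearrangement:
  fixes \<mu> :: "real^'n::{finite,linorder}"
  obtains a :: "real^'n::{finite,linorder}" where "sorted_desc a" "entries a = entries \<mu>"
proof -
  define L where "L = rev (sorted_list_of_multiset (entries \<mu>))"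
  have len: "length L = CARD('n)"
    unfolding L_def by (metis entries_def length_rev mset_sorted_list_of_multiset size_image_mset size_mset size_mset_set)
  have L_desc: "L ! j \<le> L ! i" if "i \<le> j" "j < length L" for i j
  proof -
    let ?S = "sorted_list_of_multiset (entries \<mu>)"
    have "?S ! (length ?S - Suc j) \<le> ?S ! (length ?S - Suc i)"
      using that unfolding L_def by (intro sorted_nth_mono) auto
    with that show ?thesis unfolding L_def by (simp add: rev_nth)
  qed
  define a :: "real^'n::{finite,linorder}" where "a = (\<chi> i. L ! ord_index i)"
  have "ord_index i < length L" for i :: 'n
    using ord_index_image len by (metis lessThan_iff rangeI)
  then have "sorted_desc a"
    unfolding sorted_desc_def a_def
    by (auto simp: strict_mono_less_eq[OF strict_mono_ord_index] intro: L_desc)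
  have "($) a = (\<lambda>i. L ! ord_index i)"
    unfolding a_def by auto
  then have "entries a = image_mset ((!) L) (image_mset ord_index (mset_set (UNIV :: 'n set)))"
    by (simp add: entries_def image_mset.compositionality o_def)
  also have "\<dots> = image_mset ((!) L) (mset_set {..<length L})"
    by (simp add: image_mset_mset_set strict_mono_imp_inj_on[OF strict_mono_ord_index] ord_index_image len)
  also have "\<dots> = mset L"
    by (simp add: map_nth flip: mset_map mset_upt atLeast0LessThan)
  finally have "entries a = entries \<mu>" by (simp add: L_def)
  with \<open>sorted_desc a\<close> show thesis by (rule that)
qed

section \<open>Spectral theorem for symmetric matrices\<close>

definition orthonormal_eigenbasis :: "real^'n^'n \<Rightarrow> ('n \<Rightarrow> real^'n) \<Rightarrow> real^'n \<Rightarrow> bool" where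
  "orthonormal_eigenbasis M q \<mu> \<longleftrightarrow>
     (\<forall>i j. q i \<bullet> q j = (if i = j then 1 else 0)) \<and> (\<forall>i. M *v q i = \<mu>$i *\<^sub>R q i)"

lemma symmetric_matrix_inner:
  fixes M :: "real^'n^'n"
  assumes "transpose M = M"
  shows "x \<bullet> (M *v y) = (M *v x) \<bullet> y"
  by (metis assms dot_lmul_matrix transpose_matrix_vector)

lemma linear_coeff_eq_0_if_quadratic_nonpos:
  fixes a b :: real
  assumes "\<And>s. 2 * s * a + s\<^sup>2 * b \<le> 0"
  shows "a = 0"
proof (rule ccontr)
  assume "a \<noteq> 0"
  define Q where "Q = \<bar>b\<bar> + 1"
  have "Q > 0" "2 * Q + b > 0" unfolding Q_def by auto
  then have "(a/Q)\<^sup>2 * (2 * Q + b) > 0"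
    using \<open>a \<noteq> 0\<close> by simp
  also have "(a/Q)\<^sup>2 * (2 * Q + b) = 2 * (a/Q) * a + (a/Q)\<^sup>2 * b"
    using \<open>Q > 0\<close> by (simp add: field_simps power2_eq_square)
  finally show False using assms[of "a/Q"] by linarith
qed

text \<open>The first-order condition along each direction orthogonal to \<open>x\<close> kills the part of
  \<open>M x\<close> orthogonal to \<open>x\<close>.\<close>

lemma rayleigh_maximizer_eigenvector:
  fixes M :: "real^'n^'n"
  assumes sym: "transpose M = M" and S: "subspace S" "\<forall>z\<in>S. M *v z \<in> S"
    and x: "x \<in> S" "x \<bullet> x = 1"
    and max: "\<And>z. z \<in> S \<Longrightarrow> z \<bullet> (M *v z) \<le> (x \<bullet> (M *v x)) * (z \<bullet> z)"
  shows "M *v x = (x \<bullet> (M *v x)) *\<^sub>R x"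
proof -
  define c where "c = x \<bullet> (M *v x)"
  have orth: "y \<bullet> (M *v x) = 0" if y: "y \<in> S" "y \<bullet> x = 0" for y
  proof (rule linear_coeff_eq_0_if_quadratic_nonpos)
    fix s
    have "x + s *\<^sub>R y \<in> S" using S x y by (simp add: subspace_add subspace_mul)
    moreover have "(x + s *\<^sub>R y) \<bullet> (M *v (x + s *\<^sub>R y)) = c + 2 * s * (y \<bullet> (M *v x)) + s\<^sup>2 * (y \<bullet> (M *v y))"
      unfolding c_def using symmetric_matrix_inner[OF sym, of x y]
      by (simp add: matrix_vector_right_distrib matrix_vector_mult_scaleR inner_add_left
          inner_add_right power2_eq_square algebra_simps inner_commute)
    moreover have "(x + s *\<^sub>R y) \<bullet> (x + s *\<^sub>R y) = 1 + s\<^sup>2 * (y \<bullet> y)"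
      using x y by (simp add: inner_add_left inner_add_right power2_eq_square inner_commute)
    ultimately show "2 * s * (y \<bullet> (M *v x)) + s\<^sup>2 * (y \<bullet> (M *v y) - c * (y \<bullet> y)) \<le> 0"
      using max[of "x + s *\<^sub>R y"] unfolding c_def by (simp add: algebra_simps)
  qed
  define w where "w = M *v x - c *\<^sub>R x"
  have "w \<in> S" unfolding w_def using S x by (simp add: subspace_diff subspace_mul)
  moreover have "w \<bullet> x = 0" unfolding w_def c_def using x
    by (simp add: inner_diff_left inner_diff_right inner_commute)
  ultimately have "w \<bullet> w = 0"
    using orth unfolding w_def by (simp add: inner_diff_right)
  then show ?thesis unfolding w_def c_def by simp
qed

lemma invariant_subspace_eigenvector:
  fixes M :: "real^'n^'n"
  assumes sym: "transpose M = M" and S: "subspace S" "\<forall>z\<in>S. M *v z \<in> S" "S \<noteq> {0}"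
  obtains x c where "x \<in> S" "norm x = 1" "M *v x = c *\<^sub>R x"
proof -
  define f where "f z = z \<bullet> (M *v z)" for z
  have f_scale: "f (r *\<^sub>R z) = r\<^sup>2 * f z" for r z
    unfolding f_def by (simp add: matrix_vector_mult_scaleR power2_eq_square)
  have unit: "(1 / norm z) *\<^sub>R z \<in> S \<inter> sphere 0 1" if "z \<in> S" "z \<noteq> 0" for z
    using S that by (simp add: subspace_mul)
  obtain y where "y \<in> S" "y \<noteq> 0" using S subspace_0 by blast
  then have "S \<inter> sphere 0 1 \<noteq> {}" using unit by blast
  moreover have "compact (S \<inter> sphere 0 1)"
    by (metis Int_commute closed_subspace compact_Int_closed compact_sphere S(1))
  moreover have "continuous_on (S \<inter> sphere 0 1) f"
    unfolding f_def by (intro continuous_intros linear_continuous_on matrix_vector_mul_bounded_linear)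
  ultimately obtain x where x: "x \<in> S \<inter> sphere 0 1" and x_max: "\<And>z. z \<in> S \<inter> sphere 0 1 \<Longrightarrow> f z \<le> f x"
    using continuous_attains_sup by metis
  have "f z \<le> f x * (z \<bullet> z)" if "z \<in> S" for z
  proof (cases "z = 0")
    case False
    then have "(1 / norm z)\<^sup>2 * f z \<le> f x"
      using x_max[OF unit[OF that]] by (simp add: f_scale)
    moreover have "(1 / norm z)\<^sup>2 = 1 / (z \<bullet> z)"
      by (simp add: power_divide power2_norm_eq_inner)
    ultimately show ?thesis
      using False by (simp add: field_simps)
  qed (simp add: f_def)
  then have "M *v x = f x *\<^sub>R x"
    using x unfolding f_def by (intro rayleigh_maximizer_eigenvector[OF sym S(1,2)]) (auto simp: norm_eq_1)
  with x show ?thesis using that[of x "f x"] by (simp add: dist_norm)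
qed

lemma invariant_orthogonal_complement_eigenvector:
  fixes M :: "real^'n^'n"
  assumes sym: "transpose M = M" and S: "subspace S" "\<forall>z\<in>S. M *v z \<in> S"
    and x: "M *v x = c *\<^sub>R x"
  shows "subspace {z \<in> S. z \<bullet> x = 0}" "\<forall>z\<in>{z \<in> S. z \<bullet> x = 0}. M *v z \<in> {z \<in> S. z \<bullet> x = 0}"
proof -
  show "subspace {z \<in> S. z \<bullet> x = 0}"
    using S(1) unfolding subspace_def by (auto simp: inner_add_left)
  have "(M *v z) \<bullet> x = c * (z \<bullet> x)" for z
    using symmetric_matrix_inner[OF sym, of z x] x by (simp add: inner_commute)
  then show "\<forall>z\<in>{z \<in> S. z \<bullet> x = 0}. M *v z \<in> {z \<in> S. z \<bullet> x = 0}"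
    using S(2) by simp
qed

lemma invariant_subspace_orthonormal_eigenvectors:
  fixes M :: "real^'n^'n"
  assumes sym: "transpose M = M"
  shows "subspace S \<Longrightarrow> \<forall>z\<in>S. M *v z \<in> S \<Longrightarrow>
    \<exists>B\<subseteq>S. pairwise orthogonal B \<and> (\<forall>b\<in>B. norm b = 1 \<and> (\<exists>c. M *v b = c *\<^sub>R b)) \<and> S \<subseteq> span B"
proof (induction "dim S" arbitrary: S rule: less_induct)
  case less
  show ?case
  proof (cases "S = {0}")
    case True
    then show ?thesis by auto
  next
    case False
    then obtain x c where x: "x \<in> S" "norm x = 1" "M *v x = c *\<^sub>R x"
      using invariant_subspace_eigenvector[OF sym less.prems] by blast
    define S' where "S' = {z \<in> S. z \<bullet> x = 0}"
    have "subspace S'" "\<forall>z\<in>S'. M *v z \<in> S'"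
      unfolding S'_def using invariant_orthogonal_complement_eigenvector[OF sym less.prems(1,2) x(3)] by blast+
    moreover have "dim S' < dim S"
    proof (rule dim_psubset)
      have "x \<notin> S'" using x(2) by (auto simp: S'_def norm_eq_1)
      then have "S' \<subset> S" using x(1) unfolding S'_def by blast
      then show "span S' \<subset> span S"
        using \<open>subspace S'\<close> less.prems(1) by (metis span_eq_iff)
    qed
    ultimately obtain B where B: "B \<subseteq> S'" "pairwise orthogonal B"
        "\<forall>b\<in>B. norm b = 1 \<and> (\<exists>c. M *v b = c *\<^sub>R b)" "S' \<subseteq> span B"
      using less.hyps by blast
    show ?thesis
    proof (intro exI[of _ "insert x B"] conjI)
      show "insert x B \<subseteq> S" using B(1) x(1) unfolding S'_def by auto
      show "pairwise orthogonal (insert x B)"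
        using B(1,2) unfolding S'_def pairwise_insert orthogonal_def
        by (auto simp: inner_commute)
      show "\<forall>b\<in>insert x B. norm b = 1 \<and> (\<exists>c. M *v b = c *\<^sub>R b)" using B(3) x by auto
      show "S \<subseteq> span (insert x B)"
      proof
        fix z assume "z \<in> S"
        then have "z - (z \<bullet> x) *\<^sub>R x \<in> S'"
          using x less.prems(1) unfolding S'_def
          by (simp add: subspace_diff subspace_mul inner_diff_left norm_eq_1)
        then show "z \<in> span (insert x B)" using B(4) by (auto simp: span_insert)
      qed
    qed
  qed
qed

theorem symmetric_matrix_orthonormal_eigenbasis:
  fixes M :: "real^'n^'n"
  assumes "transpose M = M"
  obtains q \<mu> where "orthonormal_eigenbasis M q \<mu>"
proof -
  obtain B where B: "pairwise orthogonal B" "\<forall>b\<in>B. norm b = 1 \<and> (\<exists>c. M *v b = c *\<^sub>R b)"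
      "UNIV \<subseteq> span B"
    using invariant_subspace_orthonormal_eigenvectors[OF assms subspace_UNIV] by auto
  then have "independent B"
    by (metis norm_zero pairwise_orthogonal_independent zero_neq_one)
  then have "finite B" "card B = dim (UNIV :: (real^'n) set)"
    using B(3) indep_card_eq_dim_span by (blast, intro basis_card_eq_dim) auto
  then obtain q where q: "bij_betw q (UNIV::'n set) B"
    using finite_same_card_bij[of "UNIV::'n set" B] by auto
  then have "q i \<in> B" for i by (simp add: bij_betwE)
  define \<mu> :: "real^'n" where "\<mu> = (\<chi> i. SOME c. M *v q i = c *\<^sub>R q i)"
  have "orthonormal_eigenbasis M q \<mu>"
    unfolding orthonormal_eigenbasis_def
  proof (intro conjI allI)
    fix i j
    show "q i \<bullet> q j = (if i = j then 1 else 0)"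
      using B \<open>\<And>i. q i \<in> B\<close> bij_betw_imp_inj_on[OF q]
      by (auto simp: norm_eq_1 pairwise_def orthogonal_def inj_def) (metis (no_types))
    show "M *v q i = \<mu>$i *\<^sub>R q i"
      using B(2) \<open>q i \<in> B\<close> unfolding \<mu>_def by (auto intro: someI_ex)
  qed
  then show ?thesis by (rule that)
qed

lemma det_mat_minus_Diag: "det (mat t - Diag \<mu>) = (\<Prod>i\<in>UNIV. t - \<mu>$i)"
proof -
  have "det (mat t - Diag \<mu>) = (\<Prod>i\<in>UNIV. (mat t - Diag \<mu>)$i$i)"
    by (rule det_diagonal) (simp add: Diag_def mat_def)
  then show ?thesis by (simp add: Diag_def mat_def)
qed

lemma det_mat_minus_eigenbasis:
  fixes M :: "real^'n^'n"
  assumes "orthonormal_eigenbasis M q \<mu>"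
  shows "det (mat t - M) = (\<Prod>i\<in>UNIV. t - \<mu>$i)"
proof -
  define Q :: "real^'n^'n" where "Q = (\<chi> r c. q c $ r)"
  have entry: "(transpose Q ** A ** Q)$i$j = q i \<bullet> (A *v q j)" for A :: "real^'n^'n" and i j
    by (simp add: Q_def matrix_matrix_mult_def matrix_vector_mult_def transpose_def inner_vec_def
        sum_distrib_left mult_ac flip: matrix_mul_assoc) (rule sum.swap)
  have "(transpose Q ** Q)$i$j = q i \<bullet> q j" for i j
    using entry[of "mat 1"] by simp
  then have "transpose Q ** Q = mat 1"
    using assms by (simp add: vec_eq_iff mat_def orthonormal_eigenbasis_def)
  then have "orthogonal_matrix Q" by (simp add: orthogonal_matrix)
  have mat_t: "mat t *v v = t *\<^sub>R v" for v :: "real^'n"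
    by (simp add: vec_eq_iff mat_def matrix_vector_mult_def if_distrib[where f="\<lambda>x. x * _"] cong: if_cong)
  have "(transpose Q ** (mat t - M) ** Q)$i$j = (t - \<mu>$j) * (q i \<bullet> q j)" for i j
    using assms unfolding entry orthonormal_eigenbasis_def
    by (simp add: matrix_vector_mult_diff_rdistrib mat_t inner_diff_right algebra_simps)
  then have "transpose Q ** (mat t - M) ** Q = mat t - Diag \<mu>"
    using assms by (simp add: vec_eq_iff orthonormal_eigenbasis_def mat_def Diag_def)
  then have "det (mat t - Diag \<mu>) = det (transpose Q ** (mat t - M) ** Q)"
    by simp
  also have "\<dots> = det (mat t - M) * (det Q)\<^sup>2"
    by (simp add: det_mul det_transpose power2_eq_square)
  also have "(det Q)\<^sup>2 = 1"
    using det_orthogonal_matrix[OF \<open>orthogonal_matrix Q\<close>] by auto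
  finally show ?thesis by (simp add: det_mat_minus_Diag)
qed

lemma eigvals_eqI:
  fixes M :: "real^'n::{finite,linorder}^'n::{finite,linorder}"
  assumes "sorted_desc a" and "\<And>t. det (mat t - M) = (\<Prod>i\<in>UNIV. t - a$i)"
  shows "eigvals M = a"
  unfolding eigvals_def
proof (rule the_equality)
  show "(\<forall>i j. i \<le> j \<longrightarrow> a $ j \<le> a $ i) \<and> (\<forall>t. det (mat t - M) = (\<Prod>i\<in>UNIV. t - a $ i))"
    using assms unfolding sorted_desc_def by auto
next
  fix b :: "real^'n::{finite,linorder}"
  assume "(\<forall>i j. i \<le> j \<longrightarrow> b $ j \<le> b $ i) \<and> (\<forall>t. det (mat t - M) = (\<Prod>i\<in>UNIV. t - b $ i))"
  then have "sorted_desc b" "entries b = entries a"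
    using assms(2) unfolding sorted_desc_def by (auto intro: entries_eq_if_char_poly_eq)
  then show "b = a"
    using sorted_desc_entries_eq assms(1) by blast
qed

lemma eigvals_eigenbasis:
  fixes M :: "real^'n::{finite,linorder}^'n::{finite,linorder}"
  assumes "orthonormal_eigenbasis M q \<mu>"
  shows "sorted_desc (eigvals M)" "entries (eigvals M) = entries \<mu>"
proof -
  obtain a :: "real^'n::{finite,linorder}" where a: "sorted_desc a" "entries a = entries \<mu>"
    using sorted_desc_rearrangement by blast
  then obtain p where p: "p permutes UNIV" "\<And>i. a$i = \<mu>$(p i)"
    using entries_eq_permutes by blast
  have "det (mat t - M) = (\<Prod>i\<in>UNIV. t - a$i)" for t
    using det_mat_minus_eigenbasis[OF assms] prod.permute[OF p(1), where g="\<lambda>i. t - \<mu>$i"]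
    by (simp add: o_def p(2))
  then have "eigvals M = a" by (rule eigvals_eqI[OF a(1)])
  with a show "sorted_desc (eigvals M)" "entries (eigvals M) = entries \<mu>" by simp_all
qed

lemma entries_eigvals_Diag: "entries (eigvals (Diag x)) = entries x"
proof -
  have "orthonormal_eigenbasis (Diag x) (\<lambda>i. axis i 1) x"
    by (auto simp: orthonormal_eigenbasis_def vec_eq_iff Diag_def axis_def inner_vec_def
        matrix_vector_mult_def if_distrib[where f="\<lambda>v. _ * v"] cong: if_cong)
  then show ?thesis by (rule eigvals_eigenbasis)
qed

lemma symmetric_fun_entries_eq:
  assumes "symmetric_fun f" "entries a = entries b"
  shows "f a = f b"
proof -
  obtain p where "p permutes UNIV" "\<And>i. a$i = b$(p i)"
    using entries_eq_permutes[OF assms(2)] by blast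
  then have "a = (\<chi> i. b$(p i))"
    by (simp add: vec_eq_iff)
  with \<open>p permutes UNIV\<close> show ?thesis
    using assms(1) unfolding symmetric_fun_def by simp
qed

section \<open>Weyl's inequality\<close>

lemma norm_matrix_vector_mult_le: "norm ((A::real^'n^'m) *v x) \<le> norm A * norm x"
proof -
  have "norm (A *v x) = L2_set (\<lambda>i. \<bar>A$i \<bullet> x\<bar>) UNIV"
    by (simp add: norm_vec_def matrix_mult_dot)
  also have "\<dots> \<le> L2_set (\<lambda>i. norm (A$i) * norm x) UNIV"
    by (intro L2_set_mono Cauchy_Schwarz_ineq2) simp
  also have "\<dots> = norm A * norm x"
    by (simp add: L2_set_left_distrib norm_vec_def)
  finally show ?thesis .
qed

lemma matrix_vector_mult_uminus_left: "(- A) *v x = - (A *v x :: real^'m)"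
  by (simp add: matrix_vector_mult_def vec_eq_iff sum_negf)

lemma orthonormal_eigenbasis_uminus:
  "orthonormal_eigenbasis M q \<mu> \<Longrightarrow> orthonormal_eigenbasis (- M) q (- \<mu>)"
  by (simp add: orthonormal_eigenbasis_def matrix_vector_mult_uminus_left)

lemma inj_orthonormal:
  assumes "\<And>i j. q i \<bullet> q j = (if i = j then 1 else 0)"
  shows "inj q"
proof (rule injI)
  fix i j assume "q i = q j"
  then show "i = j"
    using assms[of i j] assms[of j j] by (auto split: if_splits)
qed

lemma rayleigh_ge_on_eigenspan:
  fixes M :: "real^'n^'n"
  assumes M: "orthonormal_eigenbasis M q \<mu>" and z: "z \<in> span (q ` I)"
    and c: "\<And>i. i \<in> I \<Longrightarrow> c \<le> \<mu>$i"
  shows "c * (z \<bullet> z) \<le> z \<bullet> (M *v z)"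
proof -
  have "inj q"
    using M unfolding orthonormal_eigenbasis_def by (simp add: inj_orthonormal)
  then obtain \<alpha> where z: "z = (\<Sum>i\<in>I. \<alpha> i *\<^sub>R q i)"
    using z span_finite[of "q ` I"] by (auto simp: sum.reindex inj_on_subset)
  have delta: "u * (q i \<bullet> q j) = (if i = j then u else 0)" for u i j
    using M by (simp add: orthonormal_eigenbasis_def)
  have "M *v z = (\<Sum>i\<in>I. (\<alpha> i * \<mu>$i) *\<^sub>R q i)"
    using M unfolding z orthonormal_eigenbasis_def
    by (simp add: linear_sum[OF matrix_vector_mul_linear] matrix_vector_mult_scaleR)
  then have "z \<bullet> (M *v z) = (\<Sum>i\<in>I. (\<alpha> i)\<^sup>2 * \<mu>$i)" "z \<bullet> z = (\<Sum>i\<in>I. (\<alpha> i)\<^sup>2)"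
    unfolding z by (simp_all add: inner_sum_left inner_sum_right delta power2_eq_square mult_ac)
  moreover have "c * (\<alpha> i)\<^sup>2 \<le> (\<alpha> i)\<^sup>2 * \<mu>$i" if "i \<in> I" for i
    using mult_right_mono[OF c[OF that], of "(\<alpha> i)\<^sup>2"] by (simp add: mult.commute)
  ultimately show ?thesis
    by (simp add: sum_distrib_left sum_mono)
qed

lemma rayleigh_le_on_eigenspan:
  fixes M :: "real^'n^'n"
  assumes "orthonormal_eigenbasis M q \<mu>" "z \<in> span (q ` I)" "\<And>i. i \<in> I \<Longrightarrow> \<mu>$i \<le> c"
  shows "z \<bullet> (M *v z) \<le> c * (z \<bullet> z)"
  using rayleigh_ge_on_eigenspan[OF orthonormal_eigenbasis_uminus[OF assms(1)] assms(2), of "- c"] assms(3)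
  by (simp add: matrix_vector_mult_uminus_left)

lemma dim_orthonormal:
  fixes q :: "'i \<Rightarrow> 'a::euclidean_space"
  assumes "\<And>i j. q i \<bullet> q j = (if i = j then 1 else 0)"
  shows "dim (q ` I) = card I"
proof -
  have "pairwise orthogonal (q ` I)"
    using assms by (auto simp: pairwise_def orthogonal_def)
  moreover have "0 \<notin> q ` I"
    using assms by (auto simp: image_iff) (metis inner_zero_left zero_neq_one)
  ultimately have "independent (q ` I)"
    by (rule pairwise_orthogonal_independent)
  then have "dim (q ` I) = card (q ` I)"
    using indep_card_eq_dim_span[of "q ` I"] by simp
  also have "\<dots> = card I"
    using inj_orthonormal[OF assms] by (simp add: card_image inj_on_subset)
  finally show ?thesis .
qed

lemma subspaces_inter_nontrivial:
  fixes S T :: "'a::euclidean_space set"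
  assumes "subspace S" "subspace T" "dim S + dim T > DIM('a)"
  obtains z where "z \<in> S" "z \<in> T" "z \<noteq> 0"
proof -
  have "dim {x + y |x y. x \<in> S \<and> y \<in> T} + dim (S \<inter> T) = dim S + dim T"
    using assms by (intro dim_sums_Int)
  moreover have "dim {x + y |x y. x \<in> S \<and> y \<in> T} \<le> DIM('a)"
    by (rule dim_subset_UNIV)
  ultimately have "dim (S \<inter> T) \<noteq> 0"
    using assms(3) by linarith
  then have "\<not> S \<inter> T \<subseteq> {0}"
    by simp
  then show ?thesis using that by blast
qed

lemma card_atMost_plus_card_atLeast:
  fixes k :: "'a::{finite,linorder}"
  shows "card {..k} + card {k..} = CARD('a) + 1"
proof -
  have "card {..k} + card {k..} = card ({..k} \<union> {k..}) + card ({..k} \<inter> {k..})"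
    by (rule card_Un_Int) simp_all
  moreover have "{..k} \<union> {k..} = UNIV" "{..k} \<inter> {k..} = {k}"
    by auto
  ultimately show ?thesis by simp
qed

lemma card_atMost_le_card_eigvals_ge:
  fixes M :: "real^'n::{finite,linorder}^'n::{finite,linorder}"
  assumes "orthonormal_eigenbasis M q \<mu>"
  shows "card {..k} \<le> card {i. eigvals M $ k \<le> \<mu>$i}"
proof -
  have "card {..k} \<le> card {i. eigvals M $ k \<le> eigvals M $ i}"
    using eigvals_eigenbasis(1)[OF assms] unfolding sorted_desc_def by (intro card_mono) auto
  also have "\<dots> = card {i. eigvals M $ k \<le> \<mu>$i}"
    using eigvals_eigenbasis(2)[OF assms] card_entries[of "\<lambda>v. eigvals M $ k \<le> v"] by metis
  finally show ?thesis .
qed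

lemma card_atLeast_le_card_eigvals_le:
  fixes M :: "real^'n::{finite,linorder}^'n::{finite,linorder}"
  assumes "orthonormal_eigenbasis M q \<mu>"
  shows "card {k..} \<le> card {i. \<mu>$i \<le> eigvals M $ k}"
proof -
  have "card {k..} \<le> card {i. eigvals M $ i \<le> eigvals M $ k}"
    using eigvals_eigenbasis(1)[OF assms] unfolding sorted_desc_def by (intro card_mono) auto
  also have "\<dots> = card {i. \<mu>$i \<le> eigvals M $ k}"
    using eigvals_eigenbasis(2)[OF assms] card_entries[of "\<lambda>v. v \<le> eigvals M $ k"] by metis
  finally show ?thesis .
qed

text \<open>Courant--Fischer: the span of the eigenvectors of \<open>A\<close> with eigenvalue at least \<open>\<lambda>\<^sub>k(A)\<close> and
  that of the eigenvectors of \<open>B\<close> with eigenvalue at most \<open>\<lambda>\<^sub>k(B)\<close> have dimensions adding up to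
  \<open>n + 1\<close> or more, hence share a nonzero vector, on which the two quadratic forms are compared.\<close>

lemma eigvals_le_if_quadratic_form_le:
  fixes A B :: "real^'n::{finite,linorder}^'n::{finite,linorder}"
  assumes "transpose A = A" "transpose B = B"
    and le: "\<And>z. z \<bullet> (A *v z) \<le> z \<bullet> (B *v z) + \<delta> * (z \<bullet> z)"
  shows "eigvals A $ k \<le> eigvals B $ k + \<delta>"
proof -
  obtain qA \<mu>A where A: "orthonormal_eigenbasis A qA \<mu>A"
    using symmetric_matrix_orthonormal_eigenbasis[OF assms(1)] by blast
  obtain qB \<mu>B where B: "orthonormal_eigenbasis B qB \<mu>B"
    using symmetric_matrix_orthonormal_eigenbasis[OF assms(2)] by blast
  define I J where "I = {i. eigvals A $ k \<le> \<mu>A$i}" and "J = {i. \<mu>B$i \<le> eigvals B $ k}"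
  have "card {..k} \<le> card I" "card {k..} \<le> card J"
    unfolding I_def J_def using card_atMost_le_card_eigvals_ge[OF A] card_atLeast_le_card_eigvals_le[OF B] .
  have "dim (span (qA ` I)) + dim (span (qB ` J)) > DIM(real^'n::{finite,linorder})"
    using A B \<open>card {..k} \<le> card I\<close> \<open>card {k..} \<le> card J\<close> card_atMost_plus_card_atLeast[of k]
    by (simp add: dim_orthonormal orthonormal_eigenbasis_def)
  then obtain z where z: "z \<in> span (qA ` I)" "z \<in> span (qB ` J)" "z \<noteq> 0"
    by (rule subspaces_inter_nontrivial[OF subspace_span subspace_span])
  have "eigvals A $ k * (z \<bullet> z) \<le> z \<bullet> (A *v z)"
    using A z(1) by (rule rayleigh_ge_on_eigenspan) (simp add: I_def)
  also have "\<dots> \<le> z \<bullet> (B *v z) + \<delta> * (z \<bullet> z)"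
    by (rule le)
  also have "z \<bullet> (B *v z) \<le> eigvals B $ k * (z \<bullet> z)"
    using B z(2) by (rule rayleigh_le_on_eigenspan) (simp add: J_def)
  finally have "eigvals A $ k * (z \<bullet> z) \<le> (eigvals B $ k + \<delta>) * (z \<bullet> z)"
    by (simp add: algebra_simps)
  with z(3) show ?thesis
    by simp
qed

lemma weyl_eigvals:
  fixes A B :: "real^'n::{finite,linorder}^'n::{finite,linorder}"
  assumes "transpose A = A" "transpose B = B"
  shows "\<bar>eigvals A $ k - eigvals B $ k\<bar> \<le> norm (A - B)"
proof -
  have form_le: "z \<bullet> (X *v z) \<le> z \<bullet> (Y *v z) + norm (X - Y) * (z \<bullet> z)" for X Y :: "real^'n::{finite,linorder}^'n::{finite,linorder}" and z
  proof -
    have "z \<bullet> ((X - Y) *v z) \<le> norm z * norm ((X - Y) *v z)"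
      by (rule norm_cauchy_schwarz)
    also have "\<dots> \<le> norm (X - Y) * (z \<bullet> z)"
      using norm_matrix_vector_mult_le[of "X - Y" z]
      by (simp add: mult_left_mono power2_norm_eq_inner[symmetric] power2_eq_square mult_ac)
    finally show ?thesis
      by (simp add: matrix_vector_mult_diff_rdistrib inner_diff_right)
  qed
  show ?thesis
    using eigvals_le_if_quadratic_form_le[OF assms form_le, of k]
      eigvals_le_if_quadratic_form_le[OF assms(2,1) form_le, of k]
    by (simp add: norm_minus_commute abs_le_iff)
qed

section \<open>Perturbation of diagonal matrices\<close>

lemma transpose_Diag [simp]: "transpose (Diag x) = Diag x"
  by (simp add: transpose_def Diag_def vec_eq_iff)

lemma Diag_in_symmats: "Diag x \<in> symmats"
  by (simp add: symmats_def)

lemma Diag_add_scaleR: "Diag x + t *\<^sub>R Diag w = Diag (x + t *\<^sub>R w)"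
  by (simp add: Diag_def vec_eq_iff)

lemma Diag_diff: "Diag x - Diag y = Diag (x - y)"
  by (simp add: Diag_def vec_eq_iff)

lemma norm_Diag: "norm (Diag x) = norm x"
proof -
  have "norm (Diag x $ i) = \<bar>x$i\<bar>" for i
    unfolding Diag_def norm_vec_def L2_set_def
    by (simp add: if_distrib[where f="\<lambda>v. v\<^sup>2"] sum.delta cong: if_cong)
  then show ?thesis
    by (simp add: norm_vec_def)
qed

lemma symmats_Diag_add_scaleR:
  assumes "Diag x + t *\<^sub>R W \<in> symmats" "t \<noteq> 0"
  shows "W \<in> symmats"
proof -
  have "t * W$j$i = t * W$i$j" for i j
  proof -
    have "transpose (Diag x + t *\<^sub>R W) $ i $ j = (Diag x + t *\<^sub>R W) $ i $ j"
      using assms(1) by (simp add: symmats_def)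
    then show ?thesis
      by (cases "i = j") (simp_all add: transpose_def Diag_def)
  qed
  with assms(2) show ?thesis
    by (simp add: symmats_def transpose_def vec_eq_iff)
qed

lemma Diag_add_scaleR_in_symmats: "W \<in> symmats \<Longrightarrow> Diag x + t *\<^sub>R W \<in> symmats"
  by (simp add: symmats_def transpose_def Diag_def vec_eq_iff)

text \<open>The sorted eigenvalues of \<open>Diag x + t W\<close> and of \<open>Diag (x + t v)\<close>, a rearrangement of
  \<open>x + t v\<close>, differ by at most \<open>t \<parallel>W - Diag v\<parallel>\<close> (Weyl); \<open>z\<close> is \<open>v\<close> plus the displacement
  divided by \<open>t\<close>.\<close>

lemma eigvals_Diag_perturbation:
  fixes x v :: "real^'n::{finite,linorder}"
  assumes "W \<in> symmats" "t > 0"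
  obtains z p where "p permutes UNIV" "eigvals (Diag x + t *\<^sub>R W) = (\<chi> i. (x + t *\<^sub>R z)$(p i))"
    "norm (z - v) \<le> real CARD('n) * norm (W - Diag v)"
proof -
  define A B where "A = Diag (x + t *\<^sub>R v)" and "B = Diag x + t *\<^sub>R W"
  obtain p where p: "p permutes UNIV" "\<And>i. eigvals A $ i = (x + t *\<^sub>R v)$(p i)"
    unfolding A_def using entries_eq_permutes[OF entries_eigvals_Diag] by blast
  define e where "e = eigvals B - eigvals A"
  have "B - A = t *\<^sub>R (W - Diag v)"
    unfolding A_def B_def by (simp add: algebra_simps flip: Diag_add_scaleR)
  moreover have "transpose B = B"
    using Diag_add_scaleR_in_symmats[OF assms(1)] unfolding B_def symmats_def by blast
  ultimately have e_le: "\<bar>e$k\<bar> \<le> t * norm (W - Diag v)" for k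
    using weyl_eigvals[of B A k] assms(2) unfolding e_def A_def by simp
  define z where "z = (\<chi> i. v$i + e$(inv p i) / t)"
  have "eigvals B = (\<chi> i. (x + t *\<^sub>R z)$(p i))"
    using assms(2) permutes_inverses(2)[OF p(1)] unfolding z_def
    by (simp add: vec_eq_iff e_def p(2) field_simps)
  moreover have "norm (z - v) \<le> real CARD('n) * norm (W - Diag v)"
  proof -
    have "norm (z - v) \<le> (\<Sum>i\<in>UNIV. \<bar>(z - v)$i\<bar>)"
      by (rule norm_le_l1_cart)
    also have "\<dots> \<le> (\<Sum>i\<in>(UNIV::'n set). norm (W - Diag v))"
      using e_le assms(2) unfolding z_def
      by (intro sum_mono) (simp add: abs_div divide_le_eq mult.commute)
    finally show ?thesis by simp
  qed
  ultimately show ?thesis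
    using p(1) that unfolding B_def by blast
qed

lemma symmetric_fun_eigvals_Diag_perturbation:
  fixes x v :: "real^'n::{finite,linorder}"
  assumes "symmetric_fun f" "W \<in> symmats" "t > 0"
  obtains z where "norm (z - v) \<le> real CARD('n) * norm (W - Diag v)"
    "f (eigvals (Diag x + t *\<^sub>R W)) = f (x + t *\<^sub>R z)"
proof -
  obtain z p where p: "p permutes UNIV" "eigvals (Diag x + t *\<^sub>R W) = (\<chi> i. (x + t *\<^sub>R z)$(p i))"
      and z: "norm (z - v) \<le> real CARD('n) * norm (W - Diag v)"
    by (rule eigvals_Diag_perturbation[OF assms(2,3)])
  have "f (eigvals (Diag x + t *\<^sub>R W)) = f (x + t *\<^sub>R z)"
    by (simp only: p(2) assms(1)[unfolded symmetric_fun_def, rule_format, OF p(1)])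
  with z show thesis by (rule that)
qed

lemma symmetric_fun_eigvals_Diag: "symmetric_fun f \<Longrightarrow> f (eigvals (Diag x)) = f x"
  by (rule symmetric_fun_entries_eq) (simp_all add: entries_eigvals_Diag)

lemma eventually_nhds_Diag_perturbation:
  fixes x v :: "real^'n::{finite,linorder}"
  assumes "symmetric_fun f" "eventually P (nhds v)"
  shows "eventually (\<lambda>W. W \<in> symmats \<longrightarrow>
      (\<forall>t>0. \<exists>z. P z \<and> f (eigvals (Diag x + t *\<^sub>R W)) = f (x + t *\<^sub>R z))) (nhds (Diag v))"
proof -
  obtain r where r: "r > 0" "\<And>z. dist z v < r \<Longrightarrow> P z"
    using assms(2) by (auto simp: eventually_nhds_metric)
  define d where "d = r / (real CARD('n) + 1)"
  show ?thesis
    unfolding eventually_nhds_metric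
  proof (intro exI[of _ d] conjI allI impI)
    show "d > 0" using r(1) by (simp add: d_def)
    fix W and t :: real assume W: "dist W (Diag v) < d" "W \<in> symmats" and "t > 0"
    then obtain z where z: "norm (z - v) \<le> real CARD('n) * norm (W - Diag v)"
        "f (eigvals (Diag x + t *\<^sub>R W)) = f (x + t *\<^sub>R z)"
      using symmetric_fun_eigvals_Diag_perturbation[OF assms(1)] by metis
    have "real CARD('n) * norm (W - Diag v) \<le> real CARD('n) * d"
      using W(1) by (simp add: dist_norm)
    also have "\<dots> < r"
      using r(1) by (simp add: d_def field_simps)
    finally have "P z"
      using z(1) r(2) by (simp add: dist_norm)
    with z(2) show "\<exists>z. P z \<and> f (eigvals (Diag x + t *\<^sub>R W)) = f (x + t *\<^sub>R z)"
      by blast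
  qed
qed

lemma eventually_nhds_Diag:
  assumes "eventually P (nhds (Diag v))"
  shows "eventually (\<lambda>w. P (Diag w)) (nhds v)"
proof -
  obtain r where "r > 0" and r: "\<And>W. dist W (Diag v) < r \<Longrightarrow> P W"
    using assms by (auto simp: eventually_nhds_metric)
  have "P (Diag w)" if "dist w v < r" for w
    using that by (intro r) (simp add: dist_norm Diag_diff norm_Diag)
  with \<open>r > 0\<close> show ?thesis
    unfolding eventually_nhds_metric by blast
qed

section \<open>Subderivatives of spectral functions\<close>

lemma Liminf_prod_at_right_le:
  fixes f :: "real \<times> 'a \<Rightarrow> 'c::complete_linorder" and g :: "real \<times> 'b \<Rightarrow> 'c"
  assumes "\<And>P. eventually P F \<Longrightarrow> eventually (\<lambda>y. \<forall>t>0. \<exists>x. P x \<and> g (t, y) = f (t, x)) G"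
  shows "Liminf (at_right 0 \<times>\<^sub>F F) f \<le> Liminf (at_right 0 \<times>\<^sub>F G) g"
  unfolding le_Liminf_iff
proof (intro allI impI)
  fix c assume "c < Liminf (at_right 0 \<times>\<^sub>F F) f"
  then have "eventually (\<lambda>p. c < f p) (at_right 0 \<times>\<^sub>F F)"
    using less_LiminfD by blast
  then obtain Pt Px where P: "eventually Pt (at_right 0)" "eventually Px F"
      "\<And>t x. Pt t \<Longrightarrow> Px x \<Longrightarrow> c < f (t, x)"
    unfolding eventually_prod_filter by blast
  show "eventually (\<lambda>p. c < g p) (at_right 0 \<times>\<^sub>F G)"
    unfolding eventually_prod_filter
  proof (intro exI conjI allI impI)
    show "eventually (\<lambda>t. 0 < t \<and> Pt t) (at_right 0)"
      using P(1) eventually_at_right_less eventually_conj by blast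
    show "eventually (\<lambda>y. \<forall>t>0. \<exists>x. Px x \<and> g (t, y) = f (t, x)) G"
      using assms[OF P(2)] .
  next
    fix t y assume "0 < t \<and> Pt t" and "\<forall>t>0. \<exists>x. Px x \<and> g (t, y) = f (t, x)"
    then show "c < g (t, y)" using P(3) by auto
  qed
qed

theorem subderiv_spectral_Diag:
  fixes \<theta> :: "real^'n::{finite,linorder} \<Rightarrow> ereal" and g :: "real^'n::{finite,linorder}^'n::{finite,linorder} \<Rightarrow> ereal"
  assumes g: "\<forall>X\<in>symmats. g X = \<theta> (eigvals X)" and sym: "symmetric_fun \<theta>"
  shows "subderiv \<theta> x v = subderiv_on symmats g (Diag x) (Diag v)"
proof -
  have g_Diag: "g (Diag x + t *\<^sub>R Diag w) = \<theta> (x + t *\<^sub>R w)" for t w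
    using g sym by (simp add: Diag_add_scaleR Diag_in_symmats symmetric_fun_eigvals_Diag)
  have g_symmats: "g (Diag x + t *\<^sub>R W) = \<theta> (eigvals (Diag x + t *\<^sub>R W))" if "W \<in> symmats" for t W
    using g Diag_add_scaleR_in_symmats[OF that] by blast
  define q where "q = (\<lambda>(t::real, w). (\<theta> (x + t *\<^sub>R w) - \<theta> x) / ereal t)"
  define Q where "Q = (\<lambda>(t::real, W). (g (Diag x + t *\<^sub>R W) - \<theta> x) / ereal t)"
  have "g (Diag x) = \<theta> x"
    using g_Diag[of 0] by simp
  then have unfold: "subderiv \<theta> x v = Liminf (at_right 0 \<times>\<^sub>F inf (nhds v) (principal UNIV)) q"
      "subderiv_on symmats g (Diag x) (Diag v) = Liminf (at_right 0 \<times>\<^sub>F inf (nhds (Diag v)) (principal symmats)) Q"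
    unfolding subderiv_on_def q_def Q_def by simp_all
  show ?thesis
    unfolding unfold
  proof (rule order.antisym; rule Liminf_prod_at_right_le)
    fix P assume "eventually P (inf (nhds v) (principal UNIV))"
    then have "eventually (\<lambda>W. W \<in> symmats \<longrightarrow>
        (\<forall>t>0. \<exists>z. P z \<and> \<theta> (eigvals (Diag x + t *\<^sub>R W)) = \<theta> (x + t *\<^sub>R z))) (nhds (Diag v))"
      by (intro eventually_nhds_Diag_perturbation[OF sym]) simp
    then show "eventually (\<lambda>W. \<forall>t>0. \<exists>z. P z \<and> Q (t, W) = q (t, z))
        (inf (nhds (Diag v)) (principal symmats))"
      unfolding eventually_inf_principal by (rule eventually_mono) (fastforce simp: Q_def q_def g_symmats)
  next
    fix P assume "eventually P (inf (nhds (Diag v)) (principal symmats))"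
    then have "eventually (\<lambda>w. Diag w \<in> symmats \<longrightarrow> P (Diag w)) (nhds v)"
      unfolding eventually_inf_principal by (rule eventually_nhds_Diag)
    then show "eventually (\<lambda>w. \<forall>t>0. \<exists>W. P W \<and> q (t, w) = Q (t, W)) (inf (nhds v) (principal UNIV))"
      unfolding eventually_inf_principal
      by (rule eventually_mono) (auto simp: Diag_in_symmats Q_def q_def g_Diag intro!: exI[of _ "Diag w" for w])
  qed
qed

section \<open>Tangent cones of spectral sets\<close>

lemma tangent_cone_iff:
  "w \<in> tangent_cone A x0 \<longleftrightarrow>
     (\<forall>e>0. \<exists>t w'. 0 < t \<and> t < e \<and> norm (w' - w) < e \<and> x0 + t *\<^sub>R w' \<in> A)"
proof
  assume "w \<in> tangent_cone A x0"
  then obtain t wk where tw: "\<And>k. t k > 0 \<and> x0 + t k *\<^sub>R wk k \<in> A" "t \<longlonglongrightarrow> 0" "wk \<longlonglongrightarrow> w"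
    unfolding tangent_cone_def by blast
  show "\<forall>e>0. \<exists>t w'. 0 < t \<and> t < e \<and> norm (w' - w) < e \<and> x0 + t *\<^sub>R w' \<in> A"
  proof (intro allI impI)
    fix e :: real assume "e > 0"
    have "eventually (\<lambda>k. dist (t k) 0 < e \<and> dist (wk k) w < e) sequentially"
      using tendstoD[OF tw(2) \<open>e > 0\<close>] tendstoD[OF tw(3) \<open>e > 0\<close>] by (rule eventually_conj)
    then obtain k where "dist (t k) 0 < e" "dist (wk k) w < e"
      unfolding eventually_sequentially by blast
    with tw(1)[of k] show "\<exists>t w'. 0 < t \<and> t < e \<and> norm (w' - w) < e \<and> x0 + t *\<^sub>R w' \<in> A"
      by (simp add: dist_norm) blast
  qed
next
  assume "\<forall>e>0. \<exists>t w'. 0 < t \<and> t < e \<and> norm (w' - w) < e \<and> x0 + t *\<^sub>R w' \<in> A"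
  then have "\<forall>k. \<exists>t w'. 0 < t \<and> t < inverse (real (Suc k)) \<and> norm (w' - w) < inverse (real (Suc k)) \<and>
      x0 + t *\<^sub>R w' \<in> A"
    by simp
  then obtain t wk where tw: "\<And>k. 0 < t k \<and> t k < inverse (real (Suc k)) \<and>
      norm (wk k - w) < inverse (real (Suc k)) \<and> x0 + t k *\<^sub>R wk k \<in> A"
    by metis
  have "norm (t k) \<le> inverse (real (Suc k))" "norm (wk k - w) \<le> inverse (real (Suc k))" for k
    using tw[of k] by auto
  then have "t \<longlonglongrightarrow> 0" "(\<lambda>k. wk k - w) \<longlonglongrightarrow> 0"
    by (auto intro: Lim_null_comparison[OF always_eventually LIMSEQ_inverse_real_of_nat])
  then show "w \<in> tangent_cone A x0"
    unfolding tangent_cone_def using tw LIM_zero_cancel by blast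
qed

definition indicator_inf :: "'a set \<Rightarrow> 'a \<Rightarrow> ereal" where
  "indicator_inf A x = (if x \<in> A then 0 else \<infinity>)"

lemma frequently_tangent_cone:
  fixes A E :: "'a::real_normed_vector set"
  assumes "w \<in> tangent_cone A x0" and E: "\<And>t w'. t > 0 \<Longrightarrow> x0 + t *\<^sub>R w' \<in> A \<Longrightarrow> w' \<in> E"
  shows "frequently (\<lambda>(t, w'). t > 0 \<and> x0 + t *\<^sub>R w' \<in> A) (at_right 0 \<times>\<^sub>F inf (nhds w) (principal E))"
  unfolding frequently_def
proof
  assume "eventually (\<lambda>p. \<not> (case p of (t, w') \<Rightarrow> t > 0 \<and> x0 + t *\<^sub>R w' \<in> A))
      (at_right 0 \<times>\<^sub>F inf (nhds w) (principal E))"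
  then obtain Pt Pw where "eventually Pt (at_right 0)" "eventually Pw (inf (nhds w) (principal E))"
      and P: "\<And>t w'. Pt t \<Longrightarrow> Pw w' \<Longrightarrow> \<not> (t > 0 \<and> x0 + t *\<^sub>R w' \<in> A)"
    unfolding eventually_prod_filter by auto
  then obtain b e where "b > 0" and Pt: "\<And>t. 0 < t \<Longrightarrow> t < b \<Longrightarrow> Pt t" and "e > 0"
      and Pw: "\<And>w'. dist w' w < e \<Longrightarrow> w' \<in> E \<Longrightarrow> Pw w'"
    unfolding eventually_at_right_field eventually_inf_principal eventually_nhds_metric by auto
  then have "min b e > 0" by simp
  then obtain t w' where t: "0 < t" "t < min b e" and w': "norm (w' - w) < min b e"
      and A: "x0 + t *\<^sub>R w' \<in> A"
    using assms(1) unfolding tangent_cone_iff by blast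
  have "Pt t" "Pw w'"
    using t w' E[OF t(1) A] by (auto intro: Pt Pw simp: dist_norm)
  with P t(1) A show False by blast
qed

lemma eventually_notin_tangent_cone:
  assumes "w \<notin> tangent_cone A x0"
  shows "eventually (\<lambda>(t, w'). t > 0 \<and> x0 + t *\<^sub>R w' \<notin> A) (at_right 0 \<times>\<^sub>F nhds w)"
proof -
  obtain e where "e > 0"
      and e: "\<And>t w'. 0 < t \<Longrightarrow> t < e \<Longrightarrow> norm (w' - w) < e \<Longrightarrow> x0 + t *\<^sub>R w' \<notin> A"
    using assms unfolding tangent_cone_iff by auto
  show ?thesis
    unfolding eventually_prod_filter
  proof (intro exI conjI allI impI)
    show "eventually (\<lambda>t. 0 < t \<and> t < e) (at_right (0::real))"
      using \<open>e > 0\<close> eventually_at_right_field by blast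
    show "eventually (\<lambda>w'. dist w' w < e) (nhds w)"
      using \<open>e > 0\<close> unfolding eventually_nhds_metric by auto
  qed (use e in \<open>auto simp: dist_norm\<close>)
qed

lemma subderiv_on_indicator_inf:
  fixes A E :: "'a::real_normed_vector set"
  assumes "x0 \<in> A" and E: "\<And>t w'. t > 0 \<Longrightarrow> x0 + t *\<^sub>R w' \<in> A \<Longrightarrow> w' \<in> E"
  shows "subderiv_on E (indicator_inf A) x0 w = (if w \<in> tangent_cone A x0 then 0 else \<infinity>)"
proof -
  define F where "F = at_right (0::real) \<times>\<^sub>F inf (nhds w) (principal E)"
  define q where "q = (\<lambda>(t::real, w'). (indicator_inf A (x0 + t *\<^sub>R w') - indicator_inf A x0) / ereal t)"
  have q: "q (t, w') = (if x0 + t *\<^sub>R w' \<in> A then 0 else \<infinity>)" if "t > 0" for t w'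
    using that assms(1) by (simp add: q_def indicator_inf_def)
  have "subderiv_on E (indicator_inf A) x0 w = Liminf F q"
    unfolding subderiv_on_def F_def q_def ..
  also have "\<dots> = (if w \<in> tangent_cone A x0 then 0 else \<infinity>)"
  proof (cases "w \<in> tangent_cone A x0")
    case True
    have "eventually (\<lambda>p. fst p > 0) F"
      unfolding F_def eventually_prod_filter
      by (intro exI[of _ "\<lambda>t. t > 0"] exI[of _ "\<lambda>_. True"]) (simp add: eventually_at_right_less)
    then have "0 \<le> Liminf F q"
      by (intro Liminf_bounded) (auto simp: q elim!: eventually_mono)
    moreover have "frequently (\<lambda>(t, w'). t > 0 \<and> x0 + t *\<^sub>R w' \<in> A) F"
      unfolding F_def using True E by (rule frequently_tangent_cone)
    then have "Liminf F q \<le> 0"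
    proof (intro Liminf_least)
      fix P assume "frequently (\<lambda>(t, w'). t > 0 \<and> x0 + t *\<^sub>R w' \<in> A) F" "eventually P F"
      then have "frequently (\<lambda>p. P p \<and> (case p of (t, w') \<Rightarrow> t > 0 \<and> x0 + t *\<^sub>R w' \<in> A)) F"
        by (rule frequently_eventually_conj)
      then obtain t w' where "P (t, w')" "t > 0" "x0 + t *\<^sub>R w' \<in> A"
        by (auto dest: frequently_ex)
      then show "(INF p\<in>Collect P. q p) \<le> 0"
        by (metis INF_lower mem_Collect_eq q)
    qed
    ultimately show ?thesis using True by simp
  next
    case False
    have "F \<le> at_right 0 \<times>\<^sub>F nhds w"
      unfolding F_def by (intro prod_filter_mono) auto
    then have "eventually (\<lambda>(t, w'). t > 0 \<and> x0 + t *\<^sub>R w' \<notin> A) F"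
      using eventually_notin_tangent_cone[OF False] by (rule filter_leD)
    then have "eventually (\<lambda>p. \<infinity> \<le> q p) F"
      by (rule eventually_mono) (auto simp: q)
    then have "\<infinity> \<le> Liminf F q"
      by (rule Liminf_bounded)
    with False show ?thesis by simp
  qed
  finally show ?thesis .
qed

theorem tangent_cone_spectral_Diag:
  fixes \<Theta> :: "(real^'n::{finite,linorder}) set"
  assumes sym: "symmetric_set \<Theta>" and "x \<in> \<Theta>"
  shows "tangent_cone \<Theta> x = {v. Diag v \<in> tangent_cone {X\<in>symmats. eigvals X \<in> \<Theta>} (Diag x)}"
proof -
  define C where "C = {X\<in>symmats. eigvals X \<in> \<Theta>}"
  have sym_ind: "symmetric_fun (indicator_inf \<Theta>)"
    using sym unfolding symmetric_set_def symmetric_fun_def indicator_inf_def by simp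
  have "\<forall>X\<in>symmats. indicator_inf C X = indicator_inf \<Theta> (eigvals X)"
    by (simp add: C_def indicator_inf_def)
  then have spectral: "subderiv (indicator_inf \<Theta>) x v = subderiv_on symmats (indicator_inf C) (Diag x) (Diag v)" for v
    using sym_ind by (rule subderiv_spectral_Diag)
  have "Diag x \<in> C"
    using symmetric_fun_eigvals_Diag[of "\<lambda>y. y \<in> \<Theta>" x] sym \<open>x \<in> \<Theta>\<close>
    by (simp add: C_def Diag_in_symmats symmetric_set_def)
  then have C: "subderiv_on symmats (indicator_inf C) (Diag x) (Diag v) =
      (if Diag v \<in> tangent_cone C (Diag x) then 0 else \<infinity>)" for v
    by (rule subderiv_on_indicator_inf) (auto simp: C_def intro: symmats_Diag_add_scaleR)
  have \<Theta>: "subderiv (indicator_inf \<Theta>) x v = (if v \<in> tangent_cone \<Theta> x then 0 else \<infinity>)" for v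
    using \<open>x \<in> \<Theta>\<close> by (rule subderiv_on_indicator_inf) simp
  have "v \<in> tangent_cone \<Theta> x \<longleftrightarrow> Diag v \<in> tangent_cone C (Diag x)" for v
    using spectral[of v] C[of v] \<Theta>[of v] by (auto split: if_splits)
  then show ?thesis
    unfolding C_def[symmetric] by blast
qed

theorem proposition3p2:
  fixes \<theta> :: "real^('n::{finite,linorder}) \<Rightarrow> ereal"
    and g :: "real^('n::{finite,linorder})^('n::{finite,linorder}) \<Rightarrow> ereal"
  assumes g_def: "\<forall>X\<in>symmats. g X = \<theta> (eigvals X)"
    and sym: "symmetric_fun \<theta>"
    and lip: "loc_lipschitz_on_dom \<theta>"
  shows "(\<forall>X\<in>symmats. \<forall>v. \<bar>g X\<bar> \<noteq> \<infinity> \<longrightarrow>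
            subderiv \<theta> (eigvals X) v = subderiv_on symmats g (Diag (eigvals X)) (Diag v))
       \<and> (\<forall>(\<Theta>::(real^('n::{finite,linorder})) set) (C::(real^('n::{finite,linorder})^('n::{finite,linorder})) set).
            symmetric_set \<Theta> \<and> C = {X\<in>symmats. eigvals X \<in> \<Theta>} \<longrightarrow>
            (\<forall>X\<in>C. tangent_cone \<Theta> (eigvals X) =
                     {v. Diag v \<in> tangent_cone C (Diag (eigvals X))}))"
proof -
  have "subderiv \<theta> (eigvals X) v = subderiv_on symmats g (Diag (eigvals X)) (Diag v)" for X v
    using g_def sym by (rule subderiv_spectral_Diag)
  moreover have "tangent_cone \<Theta> (eigvals X) = {v. Diag v \<in> tangent_cone C (Diag (eigvals X))}"
    if "symmetric_set \<Theta>" "C = {X\<in>symmats. eigvals X \<in> \<Theta>}" "X \<in> C"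
    for \<Theta> C and X :: "real^('n::{finite,linorder})^('n::{finite,linorder})"
    using that tangent_cone_spectral_Diag[of \<Theta> "eigvals X"] by simp
  ultimately show ?thesis by blast
qed

end
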